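(* Let $V$ be a real vector space and let $C$ be a convex cone in $V$ with $0\in C$. Suppose $Y$ is a $C$-antichain-convex subset of $V$. Then: (1) for each $y\in\operatorname{co}(Y)$ there exists $z\in Y$ such that $z\in y+C$ (i.e., $y$ is $C$-Pareto dominated by some element of $Y$); (2) for each $y\in\operatorname{co}(Y)$ there exists $x\in Y$ such that $y\in x+C$ (i.e., $y$ $C$-Pareto dominates some element of $Y$).
   Context: A cone in a real vector space $V$ is a subset $C$ with $\lambda C\subseteq C$ for all $\lambda>0$ (it may be empty and need not contain $0$). A subset $S\subseteq V$ is $C$-antichain-convex iff for all $x,y\in S$ and $\lambda\in[0,1]$ with $y-x\notin C\cup(-C)$ one has $\lambda x+(1-\lambda)y\in S$. An element $v\in V$ is $C$-Pareto dominated by $z\in V$ iff $z\in v+C$. $\operatorname{co}$ denotes the convex hull. *)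

theory Defs
  imports "HOL-Analysis.Analysis"
begin

text \<open>A cone in the sense of the paper: closed under multiplication by positive scalars
  (may be empty, need not contain 0).\<close>
definition pos_cone :: "'a::real_vector set \<Rightarrow> bool" where
  "pos_cone C \<longleftrightarrow> (\<forall>t::real. t > 0 \<longrightarrow> (\<forall>c\<in>C. t *\<^sub>R c \<in> C))"

definition antichain_convex :: "'a::real_vector set \<Rightarrow> 'a set \<Rightarrow> bool" where
  "antichain_convex C S \<longleftrightarrow>
     (\<forall>x\<in>S. \<forall>y\<in>S. \<forall>t::real. 0 \<le> t \<and> t \<le> 1 \<and> y - x \<notin> C \<union> uminus ` C
        \<longrightarrow> t *\<^sub>R x + (1 - t) *\<^sub>R y \<in> S)"

end

theory Submission
  imports Defs
begin

text \<open>The points dominated by some element of \<open>Y\<close> form a convex set containing \<open>Y\<close>: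
  a convex combination of dominated points is dominated by the same combination of their
  dominators, and a combination of two points of \<open>Y\<close> either lies in \<open>Y\<close> (if the points
  are incomparable) or is dominated by one of them (if they are comparable).  Hence this set
  contains \<open>co(Y)\<close>.  Part (2) is part (1) for the opposite cone \<open>-C\<close>.\<close>

lemma convex_cone_if_pos_cone:
  assumes "pos_cone C" "convex C" "0 \<in> C"
  shows "convex_cone C"
  using assms unfolding convex_cone_def conic_def pos_cone_def
  by (metis empty_iff le_less scaleR_zero_left)

lemma mem_uminus_image_iff: "(x::'a::group_add) \<in> uminus ` S \<longleftrightarrow> - x \<in> S"
  by force

lemma antichain_convex_uminus_cone:
  "antichain_convex (uminus ` C) Y \<longleftrightarrow> antichain_convex C Y"
  by (simp add: antichain_convex_def image_image Un_commute)

lemma antichain_convex_segment_dominated: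
  assumes "conic C" "0 \<in> C" "antichain_convex C Y"
    and "a \<in> Y" "b \<in> Y" "0 \<le> t" "t \<le> 1"
  shows "\<exists>z\<in>Y. z - (t *\<^sub>R a + (1 - t) *\<^sub>R b) \<in> C"
proof -
  consider "b - a \<in> C" | "a - b \<in> C" | "b - a \<notin> C \<union> uminus ` C"
    by (auto simp: mem_uminus_image_iff)
  then show ?thesis
  proof cases
    case 1
    have "b - (t *\<^sub>R a + (1 - t) *\<^sub>R b) = t *\<^sub>R (b - a)"
      by (simp add: algebra_simps)
    then show ?thesis
      using \<open>b \<in> Y\<close> conicD[OF \<open>conic C\<close> 1 \<open>0 \<le> t\<close>] by metis
  next
    case 2
    have "a - (t *\<^sub>R a + (1 - t) *\<^sub>R b) = (1 - t) *\<^sub>R (a - b)"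
      by (simp add: algebra_simps)
    then show ?thesis
      using \<open>a \<in> Y\<close> \<open>t \<le> 1\<close> conicD[OF \<open>conic C\<close> 2] by (metis diff_ge_0_iff_ge)
  next
    case 3
    then have "t *\<^sub>R a + (1 - t) *\<^sub>R b \<in> Y"
      using assms unfolding antichain_convex_def by blast
    then show ?thesis
      using \<open>0 \<in> C\<close> by force
  qed
qed

lemma convex_hull_antichain_convex_dominated:
  assumes "convex_cone C" "antichain_convex C Y" "y \<in> convex hull Y"
  shows "\<exists>z\<in>Y. z - y \<in> C"
proof -
  let ?D = "{y. \<exists>z\<in>Y. z - y \<in> C}"
  have "conic C" "0 \<in> C"
    using \<open>convex_cone C\<close> by (auto simp: convex_cone_def convex_cone_contains_0)
  have "Y \<subseteq> ?D"
    using \<open>0 \<in> C\<close> by force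
  moreover have "convex ?D"
  proof (rule convexI)
    fix x y and u v :: real
    assume "x \<in> ?D" "y \<in> ?D" "0 \<le> u" "0 \<le> v" "u + v = 1"
    then obtain zx zy where zx: "zx \<in> Y" "zx - x \<in> C" and zy: "zy \<in> Y" "zy - y \<in> C"
      by blast
    have "u \<le> 1" "v = 1 - u"
      using \<open>0 \<le> v\<close> \<open>u + v = 1\<close> by auto
    then obtain z where z: "z \<in> Y" "z - (u *\<^sub>R zx + v *\<^sub>R zy) \<in> C"
      using antichain_convex_segment_dominated[OF \<open>conic C\<close> \<open>0 \<in> C\<close> assms(2) zx(1) zy(1)
          \<open>0 \<le> u\<close>]
      by blast
    have "z - (u *\<^sub>R x + v *\<^sub>R y) =
        (z - (u *\<^sub>R zx + v *\<^sub>R zy)) + (u *\<^sub>R (zx - x) + v *\<^sub>R (zy - y))"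
      by (simp add: algebra_simps)
    also have "\<dots> \<in> C"
      using z(2) zx(2) zy(2) \<open>0 \<le> u\<close> \<open>0 \<le> v\<close> assms(1)
      by (intro convex_cone_add convex_cone_scaleR) auto
    finally show "u *\<^sub>R x + v *\<^sub>R y \<in> ?D"
      using z(1) by blast
  qed
  ultimately have "convex hull Y \<subseteq> ?D"
    by (rule hull_minimal)
  then show ?thesis
    using \<open>y \<in> convex hull Y\<close> by blast
qed

theorem lemma5:
  fixes C Y :: "'a::real_vector set"
  assumes "pos_cone C" and "convex C" and "0 \<in> C"
    and "antichain_convex C Y"
  shows "(\<forall>y\<in>convex hull Y. \<exists>z\<in>Y. z \<in> (+) y ` C)
       \<and> (\<forall>y\<in>convex hull Y. \<exists>x\<in>Y. y \<in> (+) x ` C)"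
proof -
  have C: "convex_cone C"
    using assms(1-3) by (rule convex_cone_if_pos_cone)
  have "convex_cone (uminus ` C)"
    using C by (simp add: convex_cone_linear_image linear_uminus)
  moreover have "antichain_convex (uminus ` C) Y"
    using assms(4) by (simp add: antichain_convex_uminus_cone)
  ultimately have "\<forall>y\<in>convex hull Y. \<exists>x\<in>Y. x - y \<in> uminus ` C"
    using convex_hull_antichain_convex_dominated by blast
  then have "\<forall>y\<in>convex hull Y. \<exists>x\<in>Y. y - x \<in> C"
    by (simp add: mem_uminus_image_iff)
  moreover have "\<forall>y\<in>convex hull Y. \<exists>z\<in>Y. z - y \<in> C"
    using convex_hull_antichain_convex_dominated[OF C assms(4)] by blast
  moreover have "\<And>a b. b \<in> (+) a ` C \<longleftrightarrow> b - a \<in> C"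
    by (force simp: image_iff)
  ultimately show ?thesis
    by simp
qed

end
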